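(* Let $G(x)=\sum_{T\in\mathcal T} w(T)$ be the generating function of Smirnov trees, a formal power series in $x_1,x_2,\dots$ with coefficients in $\mathbb Z[\bar\rho,\rho,\bar\lambda,\lambda]$. Then $$G(x)=\sum_{n\ge1}\sum_{w\in\mathcal W_n} s^{\operatorname{asc} w}\,t^{\operatorname{des} w}\,x_w,$$ where $s=\bar\rho\,\bar\lambda\,G(x)+\bar\rho+\bar\lambda$ and $t=\rho\,\lambda\,G(x)+\rho+\lambda$.
   Context: A word $w=w_1\cdots w_n$ over $\mathbb N=\{1,2,\dots\}$ is a Smirnov word of length $n$ if $w_i\ne w_{i+1}$ for $i=1,\dots,n-1$; $\mathcal W_n$ is the set of Smirnov words of length $n$, $x_w=x_{w_1}\cdots x_{w_n}$, $\operatorname{asc} w=|\{i: w_i<w_{i+1}\}|$, $\operatorname{des} w=|\{i:w_i>w_{i+1}\}|$. Trees are labeled rooted binary trees (each child is a left or a right child, at most one of each) with labels in $\mathbb N$ and at least one node. A Smirnov tree is such a tree where: whenever a left child has the same label $i$ as its parent, the parent also has a right child with label $<i$; and whenever a right child has the same label $i$ as its parent, the parent also has a left child with label $>i$. $\mathcal T$ is the set of Smirnov trees. Weights: $\rho,\bar\rho,\lambda,\bar\lambda$ are commuting indeterminates. An edge from a parent with label $a$ to its right child with label $b$ has weight $\bar\rho$ if $a\le b$ and $\rho$ if $a>b$. An edge between a left child with label $a$ and its parent with label $b$ has weight $\bar\lambda$ if $a\le b$ and $\lambda$ if $a>b$. A node with label $a$ has weight $x_a$. The weight $w(T)$ is the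 product of the weights of all edges and nodes of $T$. *)

theory Defs
  imports "HOL-Library.Multiset" "HOL-Computational_Algebra.Polynomial"
begin

text \<open>A monomial x_{i_1} ... x_{i_k} is represented by the multiset of its indices;
  a formal power series is its coefficient function.\<close>

type_synonym 'a mps = "nat multiset \<Rightarrow> 'a"

definition mps_const :: "'a::comm_ring_1 \<Rightarrow> 'a mps" where
  "mps_const c = (\<lambda>M. if M = {#} then c else 0)"

definition mps_monom :: "nat multiset \<Rightarrow> 'a::comm_ring_1 mps" where
  "mps_monom A = (\<lambda>M. if M = A then 1 else 0)"

definition mps_add :: "'a::comm_ring_1 mps \<Rightarrow> 'a mps \<Rightarrow> 'a mps" where
  "mps_add f g = (\<lambda>M. f M + g M)"

definition mps_smult :: "'a::comm_ring_1 \<Rightarrow> 'a mps \<Rightarrow> 'a mps" where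
  "mps_smult c f = (\<lambda>M. c * f M)"

definition mps_mult :: "'a::comm_ring_1 mps \<Rightarrow> 'a mps \<Rightarrow> 'a mps" where
  "mps_mult f g = (\<lambda>M. \<Sum>A\<in>{A. A \<subseteq># M}. f A * g (M - A))"

primrec mps_pow :: "'a::comm_ring_1 mps \<Rightarrow> nat \<Rightarrow> 'a mps" where
  "mps_pow f 0 = mps_const 1"
| "mps_pow f (Suc n) = mps_mult f (mps_pow f n)"

definition mps_summable :: "'i set \<Rightarrow> ('i \<Rightarrow> 'a::comm_ring_1 mps) \<Rightarrow> bool" where
  "mps_summable I F = (\<forall>M. finite {i \<in> I. F i M \<noteq> 0})"

definition mps_sum :: "'i set \<Rightarrow> ('i \<Rightarrow> 'a::comm_ring_1 mps) \<Rightarrow> 'a mps" where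
  "mps_sum I F = (\<lambda>M. \<Sum>i\<in>{i \<in> I. F i M \<noteq> 0}. F i M)"

text \<open>Leaf means "no node"; a tree (with at least one node) is a Node.
  In Node L a R, L is the left subtree (Leaf = no left child), a is the root label.\<close>

datatype tree = Leaf | Node tree nat tree

fun root_label :: "tree \<Rightarrow> nat option" where
  "root_label Leaf = None"
| "root_label (Node L a R) = Some a"

fun smirnov_tree :: "tree \<Rightarrow> bool" where
  "smirnov_tree Leaf = True"
| "smirnov_tree (Node L a R) =
     (smirnov_tree L \<and> smirnov_tree R \<and>
      (root_label L = Some a \<longrightarrow> (\<exists>b. root_label R = Some b \<and> b < a)) \<and>
      (root_label R = Some a \<longrightarrow> (\<exists>b. root_label L = Some b \<and> b > a)))"

fun tree_labels :: "tree \<Rightarrow> nat multiset" where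
  "tree_labels Leaf = {#}"
| "tree_labels (Node L a R) = tree_labels L + {#a#} + tree_labels R"

text \<open>Product of the edge weights (rb = rho-bar, r = rho, lb = lambda-bar, l = lambda).\<close>

fun tree_edge_weight :: "'a::comm_ring_1 \<Rightarrow> 'a \<Rightarrow> 'a \<Rightarrow> 'a \<Rightarrow> tree \<Rightarrow> 'a" where
  "tree_edge_weight rb r lb l Leaf = 1"
| "tree_edge_weight rb r lb l (Node L a R) =
     (case L of Leaf \<Rightarrow> 1 | Node _ c _ \<Rightarrow> (if c \<le> a then lb else l)) *
     (case R of Leaf \<Rightarrow> 1 | Node _ b _ \<Rightarrow> (if a \<le> b then rb else r)) *
     tree_edge_weight rb r lb l L * tree_edge_weight rb r lb l R"

definition tree_weight :: "'a::comm_ring_1 \<Rightarrow> 'a \<Rightarrow> 'a \<Rightarrow> 'a \<Rightarrow> tree \<Rightarrow> 'a mps" where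
  "tree_weight rb r lb l T =
     (\<lambda>M. if M = tree_labels T then tree_edge_weight rb r lb l T else 0)"

definition smirnov_trees :: "tree set" where
  "smirnov_trees = {T. T \<noteq> Leaf \<and> smirnov_tree T \<and> 0 \<notin># tree_labels T}"

definition smirnov_word :: "nat list \<Rightarrow> bool" where
  "smirnov_word w = (0 \<notin> set w \<and> (\<forall>i. Suc i < length w \<longrightarrow> w ! i \<noteq> w ! Suc i))"

definition asc :: "nat list \<Rightarrow> nat" where
  "asc w = card {i. Suc i < length w \<and> w ! i < w ! Suc i}"

definition des :: "nat list \<Rightarrow> nat" where
  "des w = card {i. Suc i < length w \<and> w ! i > w ! Suc i}"

definition smirnov_words :: "nat list set" where
  "smirnov_words = {w. w \<noteq> [] \<and> smirnov_word w}"

type_synonym coeff = "int poly poly poly poly"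

definition rhobar :: coeff where "rhobar = monom 1 1"
definition rho :: coeff where "rho = [:monom 1 1:]"
definition lambdabar :: coeff where "lambdabar = [:[:monom 1 1:]:]"
definition lambda :: coeff where "lambda = [:[:[:monom 1 1:]:]:]"

end

theory Submission
  imports Defs
begin

text \<open>Fix an alphabet \<open>{1..m}\<close>. Let \<open>g\<^sub>a\<close> be the series of Smirnov trees with labels in
  \<open>{1..m}\<close> and root label \<open>a\<close>, and \<open>f\<^sub>a\<close> the series of Smirnov words over \<open>{1..m}\<close> starting
  with \<open>a\<close>, a word \<open>w\<close> weighted by \<open>S\<^bsup>asc w\<^esup> T\<^bsup>des w\<^esup> x\<^sub>w\<close>. Removing the root, resp. the first
  letter, gives (with \<open>rb, r, lb, l\<close> for \<open>\<rho>-bar, \<rho>, \<lambda>-bar, \<lambda>\<close> and \<open>g\<^sub><\<^sub>a = \<Sum>\<^sub>b\<^sub><\<^sub>a g\<^sub>b\<close>)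
  \<^item> \<open>g\<^sub>a = x\<^sub>a ((1 + lb g\<^sub><\<^sub>a + l g\<^sub>>\<^sub>a) (1 + rb g\<^sub>>\<^sub>a + r g\<^sub><\<^sub>a) + g\<^sub>a (lb r g\<^sub><\<^sub>a + l rb g\<^sub>>\<^sub>a))\<close>,
  \<^item> \<open>f\<^sub>a = x\<^sub>a (1 + S f\<^sub>>\<^sub>a + T f\<^sub><\<^sub>a)\<close>.

  In both cases a telescoping product over \<open>a = 1, \<dots>, m\<close> shows that \<open>X = \<Sum>\<^sub>a g\<^sub>a\<close>, resp.
  \<open>X = \<Sum>\<^sub>a f\<^sub>a\<close>, solves \<open>(1 + S X) \<Prod>\<^sub>a (1 + T x\<^sub>a) = (1 + T X) \<Prod>\<^sub>a (1 + S x\<^sub>a)\<close>, where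
  \<open>S = rb + lb + rb lb G\<close> and \<open>T = r + l + r l G\<close> for \<open>G = \<Sum>\<^sub>a g\<^sub>a\<close>. This equation is linear in \<open>X\<close>
  and the constant term of \<open>S \<Prod>\<^sub>a (1 + T x\<^sub>a) - T \<Prod>\<^sub>a (1 + S x\<^sub>a)\<close> is \<open>rb + lb - r - l\<close>, which is not
  a zero divisor; hence the solution is unique and \<open>\<Sum>\<^sub>a g\<^sub>a = \<Sum>\<^sub>a f\<^sub>a\<close>. A coefficient of a monomial
  in \<open>x\<^sub>1, \<dots>, x\<^sub>m\<close> is the same for the truncated and for the full series.\<close>

section \<open>Formal power series in commuting variables\<close>

lemma finite_submultisets: "finite {A. A \<subseteq># (M :: 'b multiset)}"
proof (rule finite_subset)
  show "{A. A \<subseteq># M} \<subseteq> mset ` {xs. set xs \<subseteq> set_mset M \<and> length xs \<le> size M}"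
  proof
    fix A assume "A \<in> {A. A \<subseteq># M}"
    moreover obtain xs where "mset xs = A" using ex_mset by blast
    ultimately show "A \<in> mset ` {xs. set xs \<subseteq> set_mset M \<and> length xs \<le> size M}"
      by (force dest: mset_subset_eqD size_mset_mono)
  qed
  show "finite (mset ` {xs. set xs \<subseteq> set_mset M \<and> length xs \<le> size M})"
    by (intro finite_imageI finite_lists_length_le) simp
qed

text \<open>\<^typ>\<open>'a mps\<close> from the definitions is a bare coefficient function; as a type of its own
  it becomes an instance of \<^class>\<open>comm_ring_1\<close>.\<close>

typedef 'a mseries = "UNIV :: (nat multiset \<Rightarrow> 'a) set"
  morphisms mcoeff Abs_mseries
  by simp

lemma mcoeff_Abs_mseries [simp]: "mcoeff (Abs_mseries f) = f"
  by (simp add: Abs_mseries_inverse)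

lemma mseries_eqI: "(\<And>M. mcoeff f M = mcoeff g M) \<Longrightarrow> f = g"
  by (metis mcoeff_inject ext)

lemma mps_mult_commute: "mps_mult f g = mps_mult g f"
proof
  fix M
  show "mps_mult f g M = mps_mult g f M"
    unfolding mps_mult_def
    by (rule sum.reindex_bij_witness[of _ "\<lambda>A. M - A" "\<lambda>A. M - A"])
       (auto simp: subset_mset.diff_diff_right mult.commute)
qed

lemma mps_mult_assoc: "mps_mult (mps_mult f g) h = mps_mult f (mps_mult g h)"
proof
  fix M :: "nat multiset"
  let ?I = "Sigma {C. C \<subseteq># M} (\<lambda>C. {A. A \<subseteq># C})"
  let ?J = "Sigma {A. A \<subseteq># M} (\<lambda>A. {B. B \<subseteq># M - A})"
  have "mps_mult (mps_mult f g) h M = (\<Sum>(C, A)\<in>?I. f A * g (C - A) * h (M - C))"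
    unfolding mps_mult_def sum_distrib_right
    by (subst sum.Sigma) (auto simp: finite_submultisets)
  also have "\<dots> = (\<Sum>(A, B)\<in>?J. f A * g B * h (M - A - B))"
    by (rule sum.reindex_bij_witness[of _ "\<lambda>(A, B). (A + B, A)" "\<lambda>(C, A). (A, C - A)"])
       (auto simp: subset_mset.le_diff_conv2 add.commute diff_diff_add_mset
          subset_mset.add_diff_inverse intro: subset_mset.order_trans diff_le_mono
          simp flip: subseteq_mset_def)
  also have "\<dots> = mps_mult f (mps_mult g h) M"
    unfolding mps_mult_def sum_distrib_left
    by (subst sum.Sigma) (auto simp: finite_submultisets mult.assoc)
  finally show "mps_mult (mps_mult f g) h M = mps_mult f (mps_mult g h) M" .
qed

lemma mps_mult_const_one: "mps_mult (mps_const 1) f = f"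
proof
  fix M
  have "mps_mult (mps_const 1) f M = (\<Sum>A\<in>{A. A \<subseteq># M}. if A = {#} then f M else 0)"
    unfolding mps_mult_def mps_const_def by (rule sum.cong) auto
  then show "mps_mult (mps_const 1) f M = f M"
    by (simp add: finite_submultisets)
qed

lemma mps_sum_eq_sum:
  assumes "finite J" "{i \<in> I. F i M \<noteq> 0} \<subseteq> J" "J \<subseteq> I"
  shows "mps_sum I F M = (\<Sum>i\<in>J. F i M)"
  unfolding mps_sum_def using assms by (intro sum.mono_neutral_left) auto

instantiation mseries :: (comm_ring_1) comm_ring_1
begin

definition "0 = Abs_mseries (\<lambda>M. 0)"
definition "1 = Abs_mseries (mps_const 1)"
definition "f + g = Abs_mseries (mps_add (mcoeff f) (mcoeff g))"
definition "f - g = Abs_mseries (\<lambda>M. mcoeff f M - mcoeff g M)"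
definition "- f = Abs_mseries (\<lambda>M. - mcoeff f M)"
definition "f * g = Abs_mseries (mps_mult (mcoeff f) (mcoeff g))"

instance
proof
  fix f g h :: "'a mseries"
  show "f * g * h = f * (g * h)"
    by (simp add: times_mseries_def mps_mult_assoc)
  show "f * g = g * f"
    by (simp add: times_mseries_def mps_mult_commute)
  show "1 * f = f"
    by (simp add: times_mseries_def one_mseries_def mps_mult_const_one mcoeff_inverse)
  show "(f + g) * h = f * h + g * h"
    by (rule mseries_eqI)
       (simp add: times_mseries_def plus_mseries_def mps_add_def mps_mult_def sum.distrib
          distrib_right)
  show "(0 :: 'a mseries) \<noteq> 1"
    by (metis mcoeff_Abs_mseries mps_const_def zero_mseries_def one_mseries_def zero_neq_one)
qed (rule mseries_eqI; simp add: zero_mseries_def plus_mseries_def minus_mseries_def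
      uminus_mseries_def mps_add_def algebra_simps)+
end

lemma mcoeff_zero [simp]: "mcoeff 0 M = 0"
  by (simp add: zero_mseries_def)

lemma mcoeff_one: "mcoeff 1 = mps_const 1"
  by (simp add: one_mseries_def)

lemma mcoeff_add [simp]: "mcoeff (f + g) M = mcoeff f M + mcoeff g M"
  by (simp add: plus_mseries_def mps_add_def)

lemma mcoeff_diff [simp]: "mcoeff (f - g) M = mcoeff f M - mcoeff g M"
  by (simp add: minus_mseries_def)

lemma mcoeff_mult: "mcoeff (f * g) = mps_mult (mcoeff f) (mcoeff g)"
  by (simp add: times_mseries_def)

lemma mcoeff_power: "mcoeff (f ^ n) = mps_pow (mcoeff f) n"
  by (induction n) (simp_all add: mcoeff_one mcoeff_mult)

lemma mcoeff_sum: "mcoeff (\<Sum>i\<in>I. f i) M = (\<Sum>i\<in>I. mcoeff (f i) M)"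
  by (induction I rule: infinite_finite_induct) auto

lemma mcoeff_mult_empty: "mcoeff (f * g) {#} = mcoeff f {#} * mcoeff g {#}"
  by (simp add: mcoeff_mult mps_mult_def)

lemma mcoeff_prod_empty: "mcoeff (\<Prod>i\<in>I. f i) {#} = (\<Prod>i\<in>I. mcoeff (f i) {#})"
  by (induction I rule: infinite_finite_induct) (auto simp: mcoeff_one mps_const_def mcoeff_mult_empty)

definition mconst :: "'a::comm_ring_1 \<Rightarrow> 'a mseries" where
  "mconst c = Abs_mseries (mps_const c)"

definition mmonom :: "nat multiset \<Rightarrow> 'a::comm_ring_1 mseries" where
  "mmonom A = Abs_mseries (mps_monom A)"

lemma mcoeff_mconst: "mcoeff (mconst c) M = (if M = {#} then c else 0)"
  by (simp add: mconst_def mps_const_def)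

lemma mcoeff_mmonom: "mcoeff (mmonom A) M = (if M = A then 1 else 0)"
  by (simp add: mmonom_def mps_monom_def)

lemma mcoeff_mconst_mult [simp]: "mcoeff (mconst c * f) M = c * mcoeff f M"
proof -
  have "mcoeff (mconst c * f) M = (\<Sum>A\<in>{A. A \<subseteq># M}. if A = {#} then c * mcoeff f M else 0)"
    unfolding mcoeff_mult mps_mult_def mcoeff_mconst by (rule sum.cong) auto
  then show ?thesis by (simp add: finite_submultisets)
qed

lemma mcoeff_mmonom_mult:
  "mcoeff (mmonom A * f) M = (if A \<subseteq># M then mcoeff f (M - A) else 0)"
proof -
  have "mcoeff (mmonom A * f) M = (\<Sum>B\<in>{B. B \<subseteq># M}. if A = B then mcoeff f (M - B) else 0)"
    unfolding mcoeff_mult mps_mult_def mcoeff_mmonom by (rule sum.cong) auto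
  then show ?thesis by (simp add: finite_submultisets)
qed

lemma mconst_mult: "mconst (a * b) = mconst a * mconst b"
  by (rule mseries_eqI) (simp add: mcoeff_mconst)

lemma mmonom_add: "mmonom (A + B) = mmonom A * mmonom B"
  by (rule mseries_eqI) (auto simp: mcoeff_mmonom_mult mcoeff_mmonom subset_mset.add_diff_inverse)

text \<open>Look at a nonzero coefficient of minimal degree of \<open>g\<close>.\<close>

lemma mseries_mult_eq_0_imp:
  assumes const: "\<And>c. mcoeff f {#} * c = 0 \<Longrightarrow> c = 0" and fg: "f * g = 0"
  shows "g = 0"
proof (rule ccontr)
  assume "g \<noteq> 0"
  then obtain M0 where "mcoeff g M0 \<noteq> 0"
    by (metis mcoeff_zero mseries_eqI)
  then obtain M where M: "mcoeff g M \<noteq> 0" and minimal: "\<And>N. size N < size M \<Longrightarrow> mcoeff g N = 0"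
    using ex_has_least_nat[of "\<lambda>M. mcoeff g M \<noteq> 0" M0 size] by (metis not_le)
  have "mcoeff (f * g) M = (\<Sum>A\<in>{A. A \<subseteq># M}. if A = {#} then mcoeff f A * mcoeff g (M - A) else 0)"
    unfolding mcoeff_mult mps_mult_def
  proof (rule sum.cong)
    fix A assume "A \<in> {A. A \<subseteq># M}"
    then have "A \<noteq> {#} \<Longrightarrow> size (M - A) < size M"
      using size_mset_mono[of A M] by (simp add: size_Diff_submset nonempty_has_size)
    then show "mcoeff f A * mcoeff g (M - A) = (if A = {#} then mcoeff f A * mcoeff g (M - A) else 0)"
      using minimal by auto
  qed simp
  also have "\<dots> = mcoeff f {#} * mcoeff g M"
    by (simp add: finite_submultisets)
  finally show False
    using fg const M by simp
qed

lemma mseries_mult_eq_0_imp_const_1: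
  "mcoeff f {#} = 1 \<Longrightarrow> f * g = 0 \<Longrightarrow> g = 0"
  by (rule mseries_mult_eq_0_imp) simp_all

definition eq_upto :: "nat multiset \<Rightarrow> 'a::comm_ring_1 mseries \<Rightarrow> 'a mseries \<Rightarrow> bool" where
  "eq_upto M f g \<longleftrightarrow> (\<forall>N. N \<subseteq># M \<longrightarrow> mcoeff f N = mcoeff g N)"

lemma eq_upto_mcoeff: "eq_upto M f g \<Longrightarrow> mcoeff f M = mcoeff g M"
  by (simp add: eq_upto_def)

lemma eq_upto_refl [simp]: "eq_upto M f f"
  by (simp add: eq_upto_def)

lemma eq_upto_add: "eq_upto M f f' \<Longrightarrow> eq_upto M g g' \<Longrightarrow> eq_upto M (f + g) (f' + g')"
  by (simp add: eq_upto_def)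

lemma eq_upto_mult: "eq_upto M f f' \<Longrightarrow> eq_upto M g g' \<Longrightarrow> eq_upto M (f * g) (f' * g')"
  unfolding eq_upto_def mcoeff_mult mps_mult_def
  by (auto intro!: sum.cong intro: subset_mset.order_trans)
     (metis diff_subset_eq_self subset_mset.order_trans)

lemma eq_upto_power: "eq_upto M f f' \<Longrightarrow> eq_upto M (f ^ n) (f' ^ n)"
  by (induction n) (simp_all add: eq_upto_mult)

lemma eq_upto_sum: "(\<And>i. i \<in> I \<Longrightarrow> eq_upto M (f i) (g i)) \<Longrightarrow> eq_upto M (\<Sum>i\<in>I. f i) (\<Sum>i\<in>I. g i)"
  by (simp add: eq_upto_def mcoeff_sum)

lemma sum_atLeastAtMost_split:
  fixes f :: "nat \<Rightarrow> 'a::comm_monoid_add"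
  assumes "a \<in> {1..m}"
  shows "(\<Sum>b\<in>{1..m}. f b) = (\<Sum>b\<in>{1..<a}. f b) + f a + (\<Sum>b\<in>{a<..m}. f b)"
proof -
  have split: "{1..m} = {1..<a} \<union> insert a {a<..m}"
    using assms by auto
  have "(\<Sum>b\<in>{1..m}. f b) = (\<Sum>b\<in>{1..<a}. f b) + (\<Sum>b\<in>insert a {a<..m}. f b)"
    unfolding split by (rule sum.union_disjoint) auto
  then show ?thesis
    by (simp add: add.assoc)
qed

lemma sum_greaterThanAtMost_pred:
  fixes f :: "nat \<Rightarrow> 'a::comm_monoid_add"
  assumes "a \<in> {1..m}"
  shows "(\<Sum>b\<in>{a - 1<..m}. f b) = f a + (\<Sum>b\<in>{a<..m}. f b)"
proof -
  have "{a - 1<..m} = insert a {a<..m}"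
    using assms by auto
  then show ?thesis
    by simp
qed

lemma prod_telescope:
  fixes u v y z :: "nat \<Rightarrow> 'a::comm_ring_1"
  assumes step: "\<And>a. a \<in> {1..m} \<Longrightarrow> u a * v (a - 1) * y a = u (a - 1) * v a * z a"
    and cancel: "\<And>k c. k < m \<Longrightarrow> u k * v k * c = 0 \<Longrightarrow> c = 0"
  shows "u m * v 0 * (\<Prod>a\<in>{1..m}. y a) = u 0 * v m * (\<Prod>a\<in>{1..m}. z a)"
proof -
  have "u k * v 0 * (\<Prod>a\<in>{1..k}. y a) = u 0 * v k * (\<Prod>a\<in>{1..k}. z a)" if "k \<le> m" for k
    using that
  proof (induction k)
    case (Suc k)
    let ?L = "u (Suc k) * v 0 * (\<Prod>a\<in>{1..Suc k}. y a)"
      and ?R = "u 0 * v (Suc k) * (\<Prod>a\<in>{1..Suc k}. z a)"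
    have "u k * v k * ?L = (u (Suc k) * v k * y (Suc k)) * (u k * v 0 * (\<Prod>a\<in>{1..k}. y a))"
      by (simp add: prod.cl_ivl_Suc ac_simps)
    also have "\<dots> = (u k * v (Suc k) * z (Suc k)) * (u 0 * v k * (\<Prod>a\<in>{1..k}. z a))"
      using step[of "Suc k"] Suc by simp
    also have "\<dots> = u k * v k * ?R"
      by (simp add: prod.cl_ivl_Suc ac_simps)
    finally have "u k * v k * (?L - ?R) = 0"
      by (simp add: right_diff_distrib)
    then have "?L - ?R = 0"
      using cancel[of k "?L - ?R"] Suc.prems by simp
    then show ?case
      by simp
  qed simp
  then show ?thesis by simp
qed

lemma functional_eq_unique:
  fixes X Y S T P Q :: "'a::comm_ring_1 mseries"
  assumes "(1 + S * X) * P = (1 + T * X) * Q" and "(1 + S * Y) * P = (1 + T * Y) * Q"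
    and "\<And>c. mcoeff (S * P - T * Q) {#} * c = 0 \<Longrightarrow> c = 0"
  shows "X = Y"
proof -
  have "(S * P - T * Q) * (X - Y) = ((1 + S * X) * P - (1 + T * X) * Q) - ((1 + S * Y) * P - (1 + T * Y) * Q)"
    by (simp add: algebra_simps)
  then have "(S * P - T * Q) * (X - Y) = 0"
    using assms(1,2) by simp
  then show ?thesis
    using mseries_mult_eq_0_imp[of "S * P - T * Q" "X - Y"] assms(3) by simp
qed

section \<open>Smirnov words\<close>

lemma nat_set_split_0: "{i::nat. Q i} = (if Q 0 then {0} else {}) \<union> Suc ` {i. Q (Suc i)}"
  by (auto simp: image_iff; metis not0_implies_Suc)

lemma card_adjacent_pairs_Cons_Cons:
  "card {i. Suc i < length (x # y # v) \<and> P ((x # y # v) ! i) ((x # y # v) ! Suc i)}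
   = of_bool (P x y) + card {i. Suc i < length (y # v) \<and> P ((y # v) ! i) ((y # v) ! Suc i)}"
proof -
  let ?S = "{i. Suc i < length (y # v) \<and> P ((y # v) ! i) ((y # v) ! Suc i)}"
  have "{i. Suc i < length (x # y # v) \<and> P ((x # y # v) ! i) ((x # y # v) ! Suc i)}
      = (if P x y then {0} else {}) \<union> Suc ` ?S"
    by (subst nat_set_split_0) simp
  moreover have "finite ?S"
    by (rule finite_subset[of _ "{..<length (y # v)}"]) auto
  ultimately show ?thesis
    by (simp add: card_image card_insert_if image_iff)
qed

lemma asc_Cons_Cons: "asc (x # y # v) = of_bool (x < y) + asc (y # v)"
  unfolding asc_def by (rule card_adjacent_pairs_Cons_Cons)

lemma des_Cons_Cons: "des (x # y # v) = of_bool (y < x) + des (y # v)"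
  unfolding des_def by (rule card_adjacent_pairs_Cons_Cons)

lemma smirnov_word_iff_distinct_adj: "smirnov_word w \<longleftrightarrow> 0 \<notin> set w \<and> distinct_adj w"
  by (simp add: smirnov_word_def distinct_adj_conv_nth)

definition word_weight :: "'a::comm_ring_1 mseries \<Rightarrow> 'a mseries \<Rightarrow> nat list \<Rightarrow> 'a mseries" where
  "word_weight S T w = S ^ asc w * T ^ des w * mmonom (mset w)"

lemma word_weight_singleton: "word_weight S T [x] = mmonom {#x#}"
  by (simp add: word_weight_def asc_def des_def)

lemma word_weight_Cons_Cons:
  assumes "x \<noteq> y"
  shows "word_weight S T (x # y # v) = (if x < y then S else T) * mmonom {#x#} * word_weight S T (y # v)"
proof -
  have monom: "mmonom (mset (x # y # v)) = mmonom {#x#} * mmonom (mset (y # v))"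
    by (simp flip: mmonom_add add: add_mset_commute)
  show ?thesis
    using assms unfolding word_weight_def monom by (simp add: asc_Cons_Cons des_Cons_Cons ac_simps)
qed

lemma mcoeff_word_weight_eq_0: "\<not> mset w \<subseteq># N \<Longrightarrow> mcoeff (word_weight S T w) N = 0"
  unfolding word_weight_def by (simp add: mult.commute[of _ "mmonom _"] mcoeff_mmonom_mult)

lemma mcoeff_word_weight_Abs:
  "mcoeff (word_weight (Abs_mseries s) (Abs_mseries t) w)
    = mps_mult (mps_mult (mps_pow s (asc w)) (mps_pow t (des w))) (mps_monom (mset w))"
  by (simp add: word_weight_def mcoeff_mult mcoeff_power mmonom_def)

lemma eq_upto_word_weight:
  "eq_upto M S S' \<Longrightarrow> eq_upto M T T' \<Longrightarrow> eq_upto M (word_weight S T w) (word_weight S' T' w)"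
  unfolding word_weight_def by (intro eq_upto_mult eq_upto_power eq_upto_refl)

lemma finite_words_submultiset: "finite {w. mset w \<subseteq># M}"
  by (rule finite_subset[OF _ finite_lists_length_le[of "set_mset M" "size M"]])
     (auto dest: mset_subset_eqD size_mset_mono)

definition smirnov_words_from :: "nat \<Rightarrow> nat \<Rightarrow> nat \<Rightarrow> nat list set" where
  "smirnov_words_from m k a = {w \<in> smirnov_words. set w \<subseteq> {1..m} \<and> length w \<le> k \<and> hd w = a}"

lemma finite_smirnov_words_from: "finite (smirnov_words_from m k a)"
  by (rule finite_subset[OF _ finite_lists_length_le[of "{1..m}" k]])
     (auto simp: smirnov_words_from_def)

lemma smirnov_words_from_Suc:
  assumes "a \<in> {1..m}"
  shows "smirnov_words_from m (Suc k) a
    = insert [a] (\<Union>b\<in>{1..m} - {a}. Cons a ` smirnov_words_from m k b)"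
proof (intro equalityI subsetI)
  fix w assume "w \<in> smirnov_words_from m (Suc k) a"
  then obtain v where w: "w = a # v" "v = [] \<or> v \<in> smirnov_words_from m k (hd v) \<and> hd v \<noteq> a"
    by (cases w; cases "tl w")
       (auto simp: smirnov_words_from_def smirnov_words_def smirnov_word_iff_distinct_adj)
  show "w \<in> insert [a] (\<Union>b\<in>{1..m} - {a}. Cons a ` smirnov_words_from m k b)"
  proof (cases "v = []")
    case False
    with w have "set v \<subseteq> {1..m}" "hd v \<noteq> a" "v \<in> smirnov_words_from m k (hd v)"
      by (auto simp: smirnov_words_from_def)
    then show ?thesis
      using w(1) hd_in_set[OF False] by blast
  qed (simp add: w)
next
  fix w assume "w \<in> insert [a] (\<Union>b\<in>{1..m} - {a}. Cons a ` smirnov_words_from m k b)"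
  then show "w \<in> smirnov_words_from m (Suc k) a"
    using assms
    by (auto simp: smirnov_words_from_def smirnov_words_def smirnov_word_iff_distinct_adj
        distinct_adj_Cons neq_Nil_conv)
qed

definition word_poly :: "'a::comm_ring_1 mseries \<Rightarrow> 'a mseries \<Rightarrow> nat \<Rightarrow> nat \<Rightarrow> nat \<Rightarrow> 'a mseries" where
  "word_poly S T m k a = (\<Sum>w\<in>smirnov_words_from m k a. word_weight S T w)"

lemma word_poly_Suc:
  assumes a: "a \<in> {1..m}"
  shows "word_poly S T m (Suc k) a = mmonom {#a#} *
    (1 + S * (\<Sum>b\<in>{a<..m}. word_poly S T m k b) + T * (\<Sum>b\<in>{1..<a}. word_poly S T m k b))"
proof -
  have Cons_weight: "word_weight S T (a # w) = (if a < b then S else T) * mmonom {#a#} * word_weight S T w"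
    if "b \<noteq> a" "w \<in> smirnov_words_from m k b" for b w
    using that by (cases w) (auto simp: smirnov_words_from_def smirnov_words_def word_weight_Cons_Cons)
  have "word_poly S T m (Suc k) a = word_weight S T [a]
      + (\<Sum>w\<in>(\<Union>b\<in>{1..m} - {a}. Cons a ` smirnov_words_from m k b). word_weight S T w)"
    unfolding word_poly_def smirnov_words_from_Suc[OF a]
    by (rule sum.insert)
       (simp_all add: finite_smirnov_words_from, auto simp: smirnov_words_from_def smirnov_words_def)
  also have "(\<Sum>w\<in>(\<Union>b\<in>{1..m} - {a}. Cons a ` smirnov_words_from m k b). word_weight S T w)
      = (\<Sum>b\<in>{1..m} - {a}. \<Sum>w\<in>Cons a ` smirnov_words_from m k b. word_weight S T w)"
    by (rule sum.UNION_disjoint) (simp_all add: finite_smirnov_words_from, auto simp: smirnov_words_from_def)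
  also have "\<dots> = (\<Sum>b\<in>{1..m} - {a}. \<Sum>w\<in>smirnov_words_from m k b. word_weight S T (a # w))"
    by (simp add: sum.reindex)
  also have "\<dots> = (\<Sum>b\<in>{1..m} - {a}. (if a < b then S else T) * mmonom {#a#} * word_poly S T m k b)"
    unfolding word_poly_def sum_distrib_left by (intro sum.cong refl) (auto simp: Cons_weight)
  also have "(\<Sum>b\<in>{1..m} - {a}. (if a < b then S else T) * mmonom {#a#} * word_poly S T m k b)
      = (\<Sum>b\<in>{a<..m}. S * mmonom {#a#} * word_poly S T m k b)
        + (\<Sum>b\<in>{1..<a}. T * mmonom {#a#} * word_poly S T m k b)"
  proof -
    have split: "{1..m} - {a} = {a<..m} \<union> {1..<a}"
      using a by auto
    have "(\<Sum>b\<in>{1..m} - {a}. (if a < b then S else T) * mmonom {#a#} * word_poly S T m k b)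
      = (\<Sum>b\<in>{a<..m}. (if a < b then S else T) * mmonom {#a#} * word_poly S T m k b)
        + (\<Sum>b\<in>{1..<a}. (if a < b then S else T) * mmonom {#a#} * word_poly S T m k b)"
      unfolding split by (rule sum.union_disjoint) auto
    then show ?thesis
      by simp
  qed
  finally show ?thesis
    by (simp add: word_weight_singleton sum_distrib_left algebra_simps)
qed

lemma mcoeff_word_poly_mono:
  assumes "size N \<le> k" "k \<le> K"
  shows "mcoeff (word_poly S T m K a) N = mcoeff (word_poly S T m k a) N"
  unfolding word_poly_def mcoeff_sum
proof (rule sum.mono_neutral_right[OF finite_smirnov_words_from])
  show "smirnov_words_from m k a \<subseteq> smirnov_words_from m K a"
    using assms(2) by (auto simp: smirnov_words_from_def)
  show "\<forall>w\<in>smirnov_words_from m K a - smirnov_words_from m k a. mcoeff (word_weight S T w) N = 0"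
  proof
    fix w assume "w \<in> smirnov_words_from m K a - smirnov_words_from m k a"
    then have "size N < size (mset w)"
      using assms(1) by (auto simp: smirnov_words_from_def)
    then show "mcoeff (word_weight S T w) N = 0"
      by (meson mcoeff_word_weight_eq_0 not_le size_mset_mono)
  qed
qed

text \<open>Words longer than \<open>size N\<close> do not contribute to the coefficient of \<open>N\<close>, so the
  truncations \<open>word_poly\<close> stabilise coefficientwise.\<close>

definition word_series :: "'a::comm_ring_1 mseries \<Rightarrow> 'a mseries \<Rightarrow> nat \<Rightarrow> nat \<Rightarrow> 'a mseries" where
  "word_series S T m a = Abs_mseries (\<lambda>N. mcoeff (word_poly S T m (size N) a) N)"

lemma mcoeff_word_series:
  "size N \<le> k \<Longrightarrow> mcoeff (word_series S T m a) N = mcoeff (word_poly S T m k a) N"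
  unfolding word_series_def mcoeff_Abs_mseries by (rule mcoeff_word_poly_mono[symmetric]) simp_all

lemma eq_upto_word_poly_word_series: "eq_upto N (word_poly S T m (size N) a) (word_series S T m a)"
  unfolding eq_upto_def by (metis mcoeff_word_series size_mset_mono)

lemma mcoeff_word_series_empty: "mcoeff (word_series S T m a) {#} = 0"
proof -
  have "smirnov_words_from m 0 a = {}"
    by (auto simp: smirnov_words_from_def smirnov_words_def)
  then show ?thesis
    by (simp add: mcoeff_word_series[of _ 0] word_poly_def)
qed

lemma word_series_rec:
  assumes a: "a \<in> {1..m}"
  shows "word_series S T m a = mmonom {#a#} *
    (1 + S * (\<Sum>b\<in>{a<..m}. word_series S T m b) + T * (\<Sum>b\<in>{1..<a}. word_series S T m b))"
proof (rule mseries_eqI)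
  fix N
  have "mcoeff (word_series S T m a) N = mcoeff (word_poly S T m (Suc (size N)) a) N"
    by (simp add: mcoeff_word_series)
  also have "\<dots> = mcoeff (mmonom {#a#} * (1 + S * (\<Sum>b\<in>{a<..m}. word_poly S T m (size N) b)
      + T * (\<Sum>b\<in>{1..<a}. word_poly S T m (size N) b))) N"
    by (simp add: word_poly_Suc[OF a])
  also have "\<dots> = mcoeff (mmonom {#a#} *
    (1 + S * (\<Sum>b\<in>{a<..m}. word_series S T m b) + T * (\<Sum>b\<in>{1..<a}. word_series S T m b))) N"
    by (intro eq_upto_mcoeff eq_upto_mult eq_upto_add eq_upto_sum eq_upto_refl
        eq_upto_word_poly_word_series)
  finally show "mcoeff (word_series S T m a) N = mcoeff (mmonom {#a#} *
    (1 + S * (\<Sum>b\<in>{a<..m}. word_series S T m b) + T * (\<Sum>b\<in>{1..<a}. word_series S T m b))) N" .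
qed

lemma word_step_identity:
  fixes f l h x S T :: "'a::comm_ring_1"
  assumes "f = x * (1 + S * h + T * l)"
  shows "(1 + T * (l + f + h) + (S - T) * (f + h)) * (1 + T * x)
    = (1 + T * (l + f + h) + (S - T) * h) * (1 + S * x)"
  unfolding assms by (simp add: algebra_simps)

lemma word_series_functional_eq:
  fixes S T :: "'a::comm_ring_1 mseries" and m :: nat
  defines "F \<equiv> \<Sum>a\<in>{1..m}. word_series S T m a"
  shows "(1 + S * F) * (\<Prod>a\<in>{1..m}. 1 + T * mmonom {#a#})
    = (1 + T * F) * (\<Prod>a\<in>{1..m}. 1 + S * mmonom {#a#})"
proof -
  define v where "v k = 1 + T * F + (S - T) * (\<Sum>b\<in>{k<..m}. word_series S T m b)" for k
  have "1 * v 0 * (\<Prod>a\<in>{1..m}. 1 + T * mmonom {#a#}) = 1 * v m * (\<Prod>a\<in>{1..m}. 1 + S * mmonom {#a#})"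
  proof (rule prod_telescope[where u = "\<lambda>_. 1"])
    fix a assume a: "a \<in> {1..m}"
    have "F = (\<Sum>b\<in>{1..<a}. word_series S T m b) + word_series S T m a
        + (\<Sum>b\<in>{a<..m}. word_series S T m b)"
      unfolding F_def using a by (rule sum_atLeastAtMost_split)
    then show "1 * v (a - 1) * (1 + T * mmonom {#a#}) = 1 * v a * (1 + S * mmonom {#a#})"
      unfolding v_def sum_greaterThanAtMost_pred[OF a] mult_1_left
      using word_step_identity[OF word_series_rec[OF a]] by simp
  next
    fix k c assume "1 * v k * c = 0"
    moreover have "mcoeff (v k) {#} = 1"
      by (simp add: v_def F_def mcoeff_mult_empty mcoeff_sum mcoeff_word_series_empty mcoeff_one
          mps_const_def)
    ultimately show "c = 0"
      by (simp add: mseries_mult_eq_0_imp_const_1)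
  qed
  moreover have "v 0 = 1 + S * F" "v m = 1 + T * F"
    unfolding v_def F_def atLeastSucAtMost_greaterThanAtMost[of 0, symmetric, simplified]
    by (simp_all add: algebra_simps)
  ultimately show ?thesis
    by simp
qed

lemma mcoeff_sum_word_series:
  assumes M: "set_mset M \<subseteq> {..m}"
  shows "mcoeff (\<Sum>a\<in>{1..m}. word_series S T m a) M
    = (\<Sum>w\<in>{w \<in> smirnov_words. mset w \<subseteq># M}. mcoeff (word_weight S T w) M)"
proof -
  define W where "W = {w \<in> smirnov_words. set w \<subseteq> {1..m} \<and> length w \<le> size M}"
  have W_eq: "W = (\<Union>a\<in>{1..m}. smirnov_words_from m (size M) a)"
    by (auto simp: W_def smirnov_words_from_def smirnov_words_def dest: hd_in_set)
  have "mcoeff (\<Sum>a\<in>{1..m}. word_series S T m a) M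
      = (\<Sum>a\<in>{1..m}. \<Sum>w\<in>smirnov_words_from m (size M) a. mcoeff (word_weight S T w) M)"
    by (simp add: mcoeff_sum mcoeff_word_series[of _ "size M"] word_poly_def)
  also have "\<dots> = (\<Sum>w\<in>W. mcoeff (word_weight S T w) M)"
    unfolding W_eq
    by (rule sum.UNION_disjoint[symmetric])
       (simp_all add: finite_smirnov_words_from, auto simp: smirnov_words_from_def)
  also have "\<dots> = (\<Sum>w\<in>{w \<in> smirnov_words. mset w \<subseteq># M}. mcoeff (word_weight S T w) M)"
  proof (rule sum.mono_neutral_right)
    show "finite W"
      unfolding W_eq by (simp add: finite_smirnov_words_from)
    show "{w \<in> smirnov_words. mset w \<subseteq># M} \<subseteq> W"
    proof
      fix w assume w: "w \<in> {w \<in> smirnov_words. mset w \<subseteq># M}"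
      then have "set w \<subseteq> set_mset M" "0 \<notin> set w" "length w \<le> size M"
        by (auto simp: smirnov_words_def smirnov_word_def dest: mset_subset_eqD size_mset_mono)
      moreover have "set w \<subseteq> {1..m}"
        using calculation M by (force simp: Suc_le_eq intro: gr0I)
      ultimately show "w \<in> W"
        using w by (simp add: W_def)
    qed
    show "\<forall>w\<in>W - {w \<in> smirnov_words. mset w \<subseteq># M}. mcoeff (word_weight S T w) M = 0"
      by (auto simp: W_def intro: mcoeff_word_weight_eq_0)
  qed
  finally show ?thesis .
qed

section \<open>Smirnov trees\<close>

definition labelled_trees :: "nat multiset \<Rightarrow> tree set" where
  "labelled_trees N = {T. tree_labels T = N}"

lemma finite_labelled_trees: "finite (labelled_trees N)"
proof (induction "size N" arbitrary: N rule: less_induct)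
  case less
  define Sub where "Sub = (\<Union>A\<in>{A. A \<subseteq># N \<and> size A < size N}. labelled_trees A)"
  have "finite {A. A \<subseteq># N \<and> size A < size N}"
    by (rule finite_subset[OF _ finite_submultisets[of N]]) auto
  then have "finite Sub"
    unfolding Sub_def using less by blast
  moreover have "labelled_trees N \<subseteq> insert Leaf ((\<lambda>(L, a, R). Node L a R) ` (Sub \<times> set_mset N \<times> Sub))"
  proof
    fix T assume T: "T \<in> labelled_trees N"
    show "T \<in> insert Leaf ((\<lambda>(L, a, R). Node L a R) ` (Sub \<times> set_mset N \<times> Sub))"
    proof (cases T)
      case (Node L a R)
      then have "N = tree_labels L + {#a#} + tree_labels R"
        using T by (simp add: labelled_trees_def)
      then have "(L, a, R) \<in> Sub \<times> set_mset N \<times> Sub"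
        by (auto simp: Sub_def labelled_trees_def)
      then show ?thesis
        using Node by force
    qed simp
  qed
  ultimately show ?case
    by (meson finite.insertI finite_SigmaI finite_imageI finite_set_mset finite_subset)
qed

definition tree_series :: "(tree \<Rightarrow> 'a::comm_ring_1) \<Rightarrow> 'a mseries" where
  "tree_series f = Abs_mseries (\<lambda>N. \<Sum>T\<in>labelled_trees N. f T)"

lemma mcoeff_tree_series: "mcoeff (tree_series f) N = (\<Sum>T\<in>labelled_trees N. f T)"
  by (simp add: tree_series_def)

lemma tree_series_add: "tree_series (\<lambda>T. f T + g T) = tree_series f + tree_series g"
  by (rule mseries_eqI) (simp add: mcoeff_tree_series sum.distrib)

lemma tree_series_cmult: "tree_series (\<lambda>T. c * f T) = mconst c * tree_series f"
  by (rule mseries_eqI) (simp add: mcoeff_tree_series sum_distrib_left)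

lemma tree_series_Leaf: "tree_series (\<lambda>T. if T = Leaf then 1 else 0) = 1"
  by (rule mseries_eqI)
     (auto simp: mcoeff_tree_series mcoeff_one mps_const_def labelled_trees_def sum.delta'
       finite_labelled_trees[unfolded labelled_trees_def])

definition at_root :: "nat \<Rightarrow> (tree \<Rightarrow> tree \<Rightarrow> 'a::zero) \<Rightarrow> tree \<Rightarrow> 'a" where
  "at_root a h T = (case T of Leaf \<Rightarrow> 0 | Node L b R \<Rightarrow> if b = a then h L R else 0)"

lemma sum_labelled_trees_at_root:
  fixes h :: "tree \<Rightarrow> tree \<Rightarrow> 'a::comm_monoid_add"
  assumes "a \<in># N"
  shows "(\<Sum>T\<in>labelled_trees N. at_root a h T)
    = (\<Sum>A\<in>{A. A \<subseteq># N - {#a#}}. \<Sum>L\<in>labelled_trees A. \<Sum>R\<in>labelled_trees (N - {#a#} - A). h L R)"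
proof -
  define N' where "N' = N - {#a#}"
  have N: "N = add_mset a N'"
    using assms by (simp add: N'_def)
  define P where "P = Sigma {A. A \<subseteq># N'} (\<lambda>A. labelled_trees A \<times> labelled_trees (N' - A))"
  define node where "node = (\<lambda>(A :: nat multiset, L, R). Node L a R)"
  have "node ` P \<subseteq> labelled_trees N"
    by (auto simp: node_def P_def labelled_trees_def N subset_mset.add_diff_inverse)
  moreover have "at_root a h T = 0" if "T \<in> labelled_trees N - node ` P" for T
  proof (cases T)
    case (Node L b R)
    have "b \<noteq> a"
    proof
      assume "b = a"
      with that Node have "tree_labels L + tree_labels R = N'"
        by (simp add: labelled_trees_def N)
      then have "(tree_labels L, L, R) \<in> P"
        by (auto simp: P_def labelled_trees_def)
      moreover have "T = node (tree_labels L, L, R)"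
        using Node \<open>b = a\<close> by (simp add: node_def)
      ultimately show False
        using that by blast
    qed
    then show ?thesis
      by (simp add: at_root_def Node)
  qed (simp add: at_root_def)
  ultimately have "(\<Sum>T\<in>labelled_trees N. at_root a h T) = (\<Sum>T\<in>node ` P. at_root a h T)"
    by (intro sum.mono_neutral_right finite_labelled_trees) auto
  also have "\<dots> = (\<Sum>(A, L, R)\<in>P. h L R)"
    by (subst sum.reindex) (auto simp: inj_on_def P_def node_def labelled_trees_def at_root_def
        intro!: sum.cong)
  also have "\<dots> = (\<Sum>A\<in>{A. A \<subseteq># N'}. \<Sum>L\<in>labelled_trees A. \<Sum>R\<in>labelled_trees (N' - A). h L R)"
    unfolding P_def
    by (subst sum.Sigma[symmetric]) (auto simp: finite_submultisets finite_labelled_trees sum.cartesian_product)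
  finally show ?thesis
    by (simp add: N'_def)
qed

lemma tree_series_at_root:
  "tree_series (at_root a (\<lambda>L R. f L * g R)) = mmonom {#a#} * (tree_series f * tree_series g)"
proof (rule mseries_eqI)
  fix N
  show "mcoeff (tree_series (at_root a (\<lambda>L R. f L * g R))) N = mcoeff (mmonom {#a#} * (tree_series f * tree_series g)) N"
  proof (cases "a \<in># N")
    case True
    then show ?thesis
      unfolding mcoeff_mmonom_mult
      by (simp add: mcoeff_tree_series sum_labelled_trees_at_root mcoeff_mult mps_mult_def sum_product)
  next
    case False
    have "at_root a (\<lambda>L R. f L * g R) T = 0" if "T \<in> labelled_trees N" for T
      using that False by (auto simp: at_root_def labelled_trees_def split: tree.split)
    then show ?thesis
      using False by (simp add: mcoeff_tree_series mcoeff_mmonom_mult)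
  qed
qed

lemma tree_step_identity:
  fixes g x lo hi rb r lb l :: "'a::comm_ring_1"
  assumes "g = x * ((1 + lb * lo + l * hi) * (1 + rb * hi + r * lo) + g * (lb * r * lo + l * rb * hi))"
  shows "(1 + lb * (lo + g) + l * hi) * (1 + r * lo + rb * (g + hi)) * (1 + (r + l + r * l * (lo + g + hi)) * x)
    = (1 + lb * lo + l * (g + hi)) * (1 + r * (lo + g) + rb * hi) * (1 + (rb + lb + rb * lb * (lo + g + hi)) * x)"
proof -
  define q where "q = (1 + lb * lo + l * hi) * (1 + rb * hi + r * lo) + g * (lb * r * lo + l * rb * hi)"
  have left: "(1 + lb * (lo + g) + l * hi) * (1 + r * lo + rb * (g + hi)) = q + (rb + lb + rb * lb * (lo + g + hi)) * g"
    and right: "(1 + lb * lo + l * (g + hi)) * (1 + r * (lo + g) + rb * hi) = q + (r + l + r * l * (lo + g + hi)) * g"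
    unfolding q_def by (simp_all add: algebra_simps)
  have "g = x * q"
    using assms by (simp add: q_def)
  then show ?thesis
    unfolding left right by (simp add: algebra_simps)
qed

definition smirnov_tree_over :: "nat \<Rightarrow> tree \<Rightarrow> bool" where
  "smirnov_tree_over m T \<longleftrightarrow> smirnov_tree T \<and> set_mset (tree_labels T) \<subseteq> {1..m}"

lemma root_label_in_labels: "root_label T = Some b \<Longrightarrow> b \<in># tree_labels T"
  by (cases T) auto

lemma root_label_eq_None_iff: "root_label T = None \<longleftrightarrow> T = Leaf"
  by (cases T) simp_all

lemma smirnov_tree_over_root_label:
  "smirnov_tree_over m T \<Longrightarrow> root_label T = Some c \<Longrightarrow> c \<in> {1..m}"
  unfolding smirnov_tree_over_def using root_label_in_labels by blast

context
  fixes rb r lb l :: "'a::comm_ring_1"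
begin

definition rooted_weight :: "nat \<Rightarrow> nat set \<Rightarrow> tree \<Rightarrow> 'a" where
  "rooted_weight m B T =
    (if smirnov_tree_over m T \<and> (\<exists>b\<in>B. root_label T = Some b) then tree_edge_weight rb r lb l T else 0)"

lemma rooted_weight_eq_0: "\<not> smirnov_tree_over m T \<Longrightarrow> rooted_weight m B T = 0"
  by (simp add: rooted_weight_def)

lemma tree_edge_weight_Node_root_label:
  "tree_edge_weight rb r lb l (Node L a R)
    = (case root_label L of None \<Rightarrow> 1 | Some c \<Rightarrow> if c \<le> a then lb else l)
      * (case root_label R of None \<Rightarrow> 1 | Some b \<Rightarrow> if a \<le> b then rb else r)
      * tree_edge_weight rb r lb l L * tree_edge_weight rb r lb l R"
  by (cases L; cases R) simp_all

text \<open>The three summands: neither child has the root label \<open>a\<close>; the left child has label \<open>a\<close>,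
  which forces a smaller right child; the right child has label \<open>a\<close>, which forces a larger left
  child.\<close>

lemma rooted_weight_Node_over:
  assumes "a \<in> {1..m}" and L: "smirnov_tree_over m L" and R: "smirnov_tree_over m R"
  defines "lo \<equiv> rooted_weight m {1..<a}" and "hi \<equiv> rooted_weight m {a<..m}"
    and "g \<equiv> rooted_weight m {a}"
  shows "rooted_weight m {a} (Node L a R)
    = ((if L = Leaf then 1 else 0) + lb * lo L + l * hi L) * ((if R = Leaf then 1 else 0) + rb * hi R + r * lo R)
      + (lb * r) * (g L * lo R) + (l * rb) * (hi L * g R)"
proof -
  note simps = lo_def hi_def g_def rooted_weight_def smirnov_tree_over_def tree_edge_weight_Node_root_label
  consider "root_label L = None" "root_label R = None"
    | c where "root_label L = None" "root_label R = Some c"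
    | c where "root_label L = Some c" "root_label R = None"
    | c b where "root_label L = Some c" "root_label R = Some b"
    by (metis option.exhaust)
  then show ?thesis
  proof cases
    case 1
    then show ?thesis
      using assms(1) by (simp add: simps root_label_eq_None_iff)
  next
    case (2 b)
    moreover have "b \<in> {1..m}" "tree_edge_weight rb r lb l L = 1"
      using 2 L R smirnov_tree_over_root_label by (auto simp: root_label_eq_None_iff)
    ultimately show ?thesis
      using assms(1) L R
      by (cases b a rule: linorder_cases)
         (simp_all add: simps flip: root_label_eq_None_iff del: tree_edge_weight.simps)
  next
    case (3 c)
    moreover have "c \<in> {1..m}" "tree_edge_weight rb r lb l R = 1"
      using 3 L R smirnov_tree_over_root_label by (auto simp: root_label_eq_None_iff)
    ultimately show ?thesis
      using assms(1) L R
      by (cases c a rule: linorder_cases)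
         (simp_all add: simps flip: root_label_eq_None_iff del: tree_edge_weight.simps)
  next
    case (4 c b)
    moreover have "c \<in> {1..m}" "b \<in> {1..m}"
      using 4 L R smirnov_tree_over_root_label by auto
    ultimately show ?thesis
      using assms(1) L R
      by (cases c a rule: linorder_cases; cases b a rule: linorder_cases)
         (simp_all add: simps flip: root_label_eq_None_iff del: tree_edge_weight.simps)
  qed
qed

lemma rooted_weight_Node:
  assumes "a \<in> {1..m}"
  defines "lo \<equiv> rooted_weight m {1..<a}" and "hi \<equiv> rooted_weight m {a<..m}"
    and "g \<equiv> rooted_weight m {a}"
  shows "rooted_weight m {a} (Node L a R)
    = ((if L = Leaf then 1 else 0) + lb * lo L + l * hi L) * ((if R = Leaf then 1 else 0) + rb * hi R + r * lo R)
      + (lb * r) * (g L * lo R) + (l * rb) * (hi L * g R)"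
proof (cases "smirnov_tree_over m L \<and> smirnov_tree_over m R")
  case True
  then show ?thesis
    unfolding lo_def hi_def g_def using assms(1) by (intro rooted_weight_Node_over) auto
next
  case False
  then have "\<not> smirnov_tree_over m (Node L a R)"
    by (auto simp: smirnov_tree_over_def)
  moreover have "smirnov_tree_over m Leaf"
    by (simp add: smirnov_tree_over_def)
  ultimately show ?thesis
    using False unfolding lo_def hi_def g_def by (auto simp: rooted_weight_eq_0)
qed

lemma rooted_weight_union:
  "B \<inter> C = {} \<Longrightarrow> rooted_weight m (B \<union> C) X = rooted_weight m B X + rooted_weight m C X"
  by (auto simp: rooted_weight_def)

definition rooted_series :: "nat \<Rightarrow> nat set \<Rightarrow> 'a mseries" where
  "rooted_series m B = tree_series (rooted_weight m B)"

lemma rooted_series_union: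
  "B \<inter> C = {} \<Longrightarrow> rooted_series m (B \<union> C) = rooted_series m B + rooted_series m C"
proof -
  assume "B \<inter> C = {}"
  then have "rooted_weight m (B \<union> C) = (\<lambda>X. rooted_weight m B X + rooted_weight m C X)"
    by (simp add: fun_eq_iff rooted_weight_union)
  then show ?thesis
    by (simp add: rooted_series_def tree_series_add)
qed

lemma rooted_series_split:
  "A = B \<union> C \<Longrightarrow> B \<inter> C = {} \<Longrightarrow> rooted_series m A = rooted_series m B + rooted_series m C"
  by (simp add: rooted_series_union)

lemma rooted_series_empty: "rooted_series m {} = 0"
  by (rule mseries_eqI) (simp add: rooted_series_def mcoeff_tree_series rooted_weight_def)

lemma mcoeff_rooted_series_empty: "mcoeff (rooted_series m B) {#} = 0"
proof -
  have "labelled_trees {#} = {Leaf}"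
    by (auto simp: labelled_trees_def elim: tree_labels.elims)
  then show ?thesis
    by (simp add: rooted_series_def mcoeff_tree_series rooted_weight_def)
qed

lemma rooted_series_rec:
  assumes a: "a \<in> {1..m}"
  defines "lo \<equiv> rooted_series m {1..<a}" and "hi \<equiv> rooted_series m {a<..m}"
    and "g \<equiv> rooted_series m {a}"
  shows "g = mmonom {#a#} * ((1 + mconst lb * lo + mconst l * hi) * (1 + mconst rb * hi + mconst r * lo)
    + g * (mconst lb * mconst r * lo + mconst l * mconst rb * hi))"
proof -
  let ?lo = "rooted_weight m {1..<a}" and ?hi = "rooted_weight m {a<..m}" and ?g = "rooted_weight m {a}"
  let ?P = "\<lambda>L. (if L = Leaf then 1 else 0) + lb * ?lo L + l * ?hi L"
    and ?Q = "\<lambda>R. (if R = Leaf then 1 else 0) + rb * ?hi R + r * ?lo R"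
  have decomp: "?g = (\<lambda>T. at_root a (\<lambda>L R. ?P L * ?Q R) T + (lb * r) * at_root a (\<lambda>L R. ?g L * ?lo R) T
      + (l * rb) * at_root a (\<lambda>L R. ?hi L * ?g R) T)"
  proof
    fix T
    show "?g T = at_root a (\<lambda>L R. ?P L * ?Q R) T + (lb * r) * at_root a (\<lambda>L R. ?g L * ?lo R) T
      + (l * rb) * at_root a (\<lambda>L R. ?hi L * ?g R) T"
    proof (cases T)
      case (Node L b R)
      show ?thesis
      proof (cases "b = a")
        case True
        then show ?thesis
          by (simp add: Node at_root_def rooted_weight_Node[OF a])
      next
        case False
        then show ?thesis
          by (simp add: Node at_root_def rooted_weight_def)
      qed
    qed (simp add: at_root_def rooted_weight_def)
  qed
  have "g = mmonom {#a#} * (tree_series ?P * tree_series ?Q)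
      + mconst (lb * r) * (mmonom {#a#} * (g * lo)) + mconst (l * rb) * (mmonom {#a#} * (hi * g))"
    unfolding g_def lo_def hi_def rooted_series_def
    by (subst (1) decomp) (simp only: tree_series_add tree_series_cmult tree_series_at_root)
  moreover have "tree_series ?P = 1 + mconst lb * lo + mconst l * hi"
    "tree_series ?Q = 1 + mconst rb * hi + mconst r * lo"
    unfolding lo_def hi_def rooted_series_def
    by (simp_all only: tree_series_add tree_series_cmult tree_series_Leaf)
  ultimately show ?thesis
    by (simp add: mconst_mult algebra_simps)
qed

definition ascent_weight :: "'a mseries \<Rightarrow> 'a mseries" where
  "ascent_weight G = mconst rb + mconst lb + mconst rb * mconst lb * G"

definition descent_weight :: "'a mseries \<Rightarrow> 'a mseries" where
  "descent_weight G = mconst r + mconst l + mconst r * mconst l * G"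

text \<open>The series of all possible left (right) children of a node labelled \<open>a\<close>, with their edge
  weights, when the Smirnov condition at that node is ignored.\<close>

definition left_child_series :: "nat \<Rightarrow> nat \<Rightarrow> 'a mseries" where
  "left_child_series m a = 1 + mconst lb * rooted_series m {1..a} + mconst l * rooted_series m {a<..m}"

definition right_child_series :: "nat \<Rightarrow> nat \<Rightarrow> 'a mseries" where
  "right_child_series m a = 1 + mconst r * rooted_series m {1..<a} + mconst rb * rooted_series m {a..m}"

lemma child_series_step:
  assumes a: "a \<in> {1..m}"
  defines "G \<equiv> rooted_series m {1..m}"
  shows "left_child_series m a * right_child_series m a * (1 + descent_weight G * mmonom {#a#})
    = left_child_series m (a - 1) * right_child_series m (Suc a) * (1 + ascent_weight G * mmonom {#a#})"
proof -
  define lo where "lo = rooted_series m {1..<a}"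
  define hi where "hi = rooted_series m {a<..m}"
  define g where "g = rooted_series m {a}"
  have lo_g: "rooted_series m {1..a} = lo + g"
    unfolding lo_def g_def using a by (intro rooted_series_split) auto
  moreover have "rooted_series m {a..m} = g + hi"
    unfolding g_def hi_def using a by (intro rooted_series_split) auto
  moreover have "G = lo + g + hi"
    unfolding G_def hi_def lo_g[symmetric] using a by (intro rooted_series_split) auto
  moreover have "{1..a - 1} = {1..<a}" "{a - 1<..m} = {a..m}" "{1..<Suc a} = {1..a}" "{Suc a..m} = {a<..m}"
    using a by auto
  ultimately have "left_child_series m a = 1 + mconst lb * (lo + g) + mconst l * hi"
    "right_child_series m a = 1 + mconst r * lo + mconst rb * (g + hi)"
    "left_child_series m (a - 1) = 1 + mconst lb * lo + mconst l * (g + hi)"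
    "right_child_series m (Suc a) = 1 + mconst r * (lo + g) + mconst rb * hi"
    "G = lo + g + hi"
    unfolding left_child_series_def right_child_series_def by (simp_all add: lo_def hi_def)
  then show ?thesis
    unfolding ascent_weight_def descent_weight_def
    using tree_step_identity[OF rooted_series_rec[OF a, folded lo_def hi_def g_def]]
    by (simp only:)
qed

lemma rooted_series_functional_eq:
  fixes m :: nat
  defines "G \<equiv> rooted_series m {1..m}"
  shows "(1 + ascent_weight G * G) * (\<Prod>a\<in>{1..m}. 1 + descent_weight G * mmonom {#a#})
    = (1 + descent_weight G * G) * (\<Prod>a\<in>{1..m}. 1 + ascent_weight G * mmonom {#a#})"
proof -
  have "left_child_series m m * right_child_series m (Suc 0) * (\<Prod>a\<in>{1..m}. 1 + descent_weight G * mmonom {#a#})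
      = left_child_series m 0 * right_child_series m (Suc m) * (\<Prod>a\<in>{1..m}. 1 + ascent_weight G * mmonom {#a#})"
  proof (rule prod_telescope[where v = "\<lambda>k. right_child_series m (Suc k)"])
    fix a assume "a \<in> {1..m}"
    then show "left_child_series m a * right_child_series m (Suc (a - 1)) * (1 + descent_weight G * mmonom {#a#})
      = left_child_series m (a - 1) * right_child_series m (Suc a) * (1 + ascent_weight G * mmonom {#a#})"
      using child_series_step[of a m] by (simp add: G_def)
  next
    fix k c assume "left_child_series m k * right_child_series m (Suc k) * c = 0"
    moreover have "mcoeff (left_child_series m k * right_child_series m (Suc k)) {#} = 1"
      by (simp add: left_child_series_def right_child_series_def mcoeff_mult_empty
          mcoeff_rooted_series_empty mcoeff_one mps_const_def)
    ultimately show "c = 0"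
      by (simp add: mseries_mult_eq_0_imp_const_1)
  qed
  moreover have "{0<..m} = {1..m}" "{1..<Suc m} = {1..m}"
    by auto
  then have "left_child_series m m * right_child_series m (Suc 0) = 1 + ascent_weight G * G"
    "left_child_series m 0 * right_child_series m (Suc m) = 1 + descent_weight G * G"
    by (simp_all add: left_child_series_def right_child_series_def ascent_weight_def descent_weight_def
        G_def rooted_series_empty algebra_simps)
  ultimately show ?thesis
    by (simp only:)
qed

section \<open>The generating function\<close>

lemma mcoeff_ascent_weight:
  "mcoeff (ascent_weight f) = mps_add (mps_smult (rb * lb) (mcoeff f)) (mps_const (rb + lb))"
  by (simp add: fun_eq_iff ascent_weight_def mps_add_def mps_smult_def mcoeff_mconst mps_const_def
      flip: mconst_mult)

lemma mcoeff_descent_weight: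
  "mcoeff (descent_weight f) = mps_add (mps_smult (r * l) (mcoeff f)) (mps_const (r + l))"
  by (simp add: fun_eq_iff descent_weight_def mps_add_def mps_smult_def mcoeff_mconst mps_const_def
      flip: mconst_mult)

lemma mps_sum_smirnov_trees:
  assumes M: "set_mset M \<subseteq> {..m}"
  shows "mps_sum smirnov_trees (tree_weight rb r lb l) M = mcoeff (rooted_series m {1..m}) M"
proof -
  have weight: "rooted_weight m {1..m} T = (if T \<in> smirnov_trees then tree_edge_weight rb r lb l T else 0)"
    if "T \<in> labelled_trees M" for T
  proof -
    have "set_mset (tree_labels T) \<subseteq> {1..m} \<longleftrightarrow> 0 \<notin># tree_labels T"
      using that M by (auto simp: labelled_trees_def Suc_le_eq intro: gr0I)
    moreover have "(\<exists>b\<in>{1..m}. root_label T = Some b) \<longleftrightarrow> T \<noteq> Leaf"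
      if "set_mset (tree_labels T) \<subseteq> {1..m}"
      using that by (cases T) auto
    ultimately have "T \<in> smirnov_trees \<longleftrightarrow> smirnov_tree_over m T \<and> (\<exists>b\<in>{1..m}. root_label T = Some b)"
      by (auto simp: smirnov_trees_def smirnov_tree_over_def)
    then show ?thesis
      by (simp add: rooted_weight_def)
  qed
  have "mps_sum smirnov_trees (tree_weight rb r lb l) M
      = (\<Sum>T\<in>labelled_trees M \<inter> smirnov_trees. tree_weight rb r lb l T M)"
    by (rule mps_sum_eq_sum)
       (simp_all add: finite_labelled_trees, auto simp: labelled_trees_def tree_weight_def)
  also have "\<dots> = (\<Sum>T\<in>labelled_trees M \<inter> smirnov_trees. tree_edge_weight rb r lb l T)"
    by (rule sum.cong) (auto simp: tree_weight_def labelled_trees_def)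
  also have "\<dots> = (\<Sum>T\<in>labelled_trees M. if T \<in> smirnov_trees then tree_edge_weight rb r lb l T else 0)"
    by (simp add: sum.inter_restrict finite_labelled_trees)
  also have "\<dots> = (\<Sum>T\<in>labelled_trees M. rooted_weight m {1..m} T)"
  proof (rule sum.cong)
    fix T assume "T \<in> labelled_trees M"
    then show "(if T \<in> smirnov_trees then tree_edge_weight rb r lb l T else 0) = rooted_weight m {1..m} T"
      by (simp only: weight)
  qed (rule refl)
  finally show ?thesis
    by (simp add: rooted_series_def mcoeff_tree_series)
qed

lemma rooted_series_eq_word_series:
  fixes m :: nat
  assumes "\<And>c. (rb + lb - r - l) * c = 0 \<Longrightarrow> c = 0"
  defines "G \<equiv> rooted_series m {1..m}"
  shows "G = (\<Sum>a\<in>{1..m}. word_series (ascent_weight G) (descent_weight G) m a)"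
proof (rule functional_eq_unique)
  show "(1 + ascent_weight G * G) * (\<Prod>a\<in>{1..m}. 1 + descent_weight G * mmonom {#a#})
    = (1 + descent_weight G * G) * (\<Prod>a\<in>{1..m}. 1 + ascent_weight G * mmonom {#a#})"
    unfolding G_def by (rule rooted_series_functional_eq)
  show "(1 + ascent_weight G * (\<Sum>a\<in>{1..m}. word_series (ascent_weight G) (descent_weight G) m a))
      * (\<Prod>a\<in>{1..m}. 1 + descent_weight G * mmonom {#a#})
    = (1 + descent_weight G * (\<Sum>a\<in>{1..m}. word_series (ascent_weight G) (descent_weight G) m a))
      * (\<Prod>a\<in>{1..m}. 1 + ascent_weight G * mmonom {#a#})"
    by (rule word_series_functional_eq)
  have "mcoeff (ascent_weight G * (\<Prod>a\<in>{1..m}. 1 + descent_weight G * mmonom {#a#})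
      - descent_weight G * (\<Prod>a\<in>{1..m}. 1 + ascent_weight G * mmonom {#a#})) {#}
    = rb + lb - r - l"
    by (simp add: G_def mcoeff_mult_empty mcoeff_prod_empty mcoeff_ascent_weight
        mcoeff_descent_weight mcoeff_rooted_series_empty mcoeff_mmonom mcoeff_one mps_add_def
        mps_smult_def mps_const_def)
  then show "\<And>c. mcoeff (ascent_weight G * (\<Prod>a\<in>{1..m}. 1 + descent_weight G * mmonom {#a#})
      - descent_weight G * (\<Prod>a\<in>{1..m}. 1 + ascent_weight G * mmonom {#a#})) {#} * c = 0 \<Longrightarrow> c = 0"
    using assms(1) by simp
qed

lemma eq_upto_ascent_weight: "eq_upto M f g \<Longrightarrow> eq_upto M (ascent_weight f) (ascent_weight g)"
  unfolding ascent_weight_def by (intro eq_upto_add eq_upto_mult eq_upto_refl)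

lemma eq_upto_descent_weight: "eq_upto M f g \<Longrightarrow> eq_upto M (descent_weight f) (descent_weight g)"
  unfolding descent_weight_def by (intro eq_upto_add eq_upto_mult eq_upto_refl)

lemma mps_sum_smirnov_trees_eq_words:
  assumes "\<And>c. (rb + lb - r - l) * c = 0 \<Longrightarrow> c = 0"
  defines "G \<equiv> mps_sum smirnov_trees (tree_weight rb r lb l)"
  shows "G M = mps_sum smirnov_words (\<lambda>w. mcoeff (word_weight (ascent_weight (Abs_mseries G))
    (descent_weight (Abs_mseries G)) w)) M"
proof -
  define m where "m = Max (insert 0 (set_mset M))"
  have below: "set_mset N \<subseteq> {..m}" if "N \<subseteq># M" for N
    using that by (auto simp: m_def dest: mset_subset_eqD)
  define GM where "GM = rooted_series m {1..m}"
  have G_coeff: "G N = mcoeff GM N" if "N \<subseteq># M" for N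
    unfolding G_def GM_def by (rule mps_sum_smirnov_trees[OF below[OF that]])
  then have "eq_upto M (Abs_mseries G) GM"
    by (simp add: eq_upto_def)
  then have weight: "eq_upto M (word_weight (ascent_weight (Abs_mseries G)) (descent_weight (Abs_mseries G)) w)
      (word_weight (ascent_weight GM) (descent_weight GM) w)" for w
    by (intro eq_upto_word_weight eq_upto_ascent_weight eq_upto_descent_weight)
  have GM_eq: "(\<Sum>a\<in>{1..m}. word_series (ascent_weight GM) (descent_weight GM) m a) = GM"
    unfolding GM_def by (rule rooted_series_eq_word_series[OF assms(1), symmetric])
  have "mps_sum smirnov_words (\<lambda>w. mcoeff (word_weight (ascent_weight (Abs_mseries G))
      (descent_weight (Abs_mseries G)) w)) M
    = (\<Sum>w\<in>{w \<in> smirnov_words. mset w \<subseteq># M}.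
        mcoeff (word_weight (ascent_weight (Abs_mseries G)) (descent_weight (Abs_mseries G)) w) M)"
  proof (rule mps_sum_eq_sum)
    show "finite {w \<in> smirnov_words. mset w \<subseteq># M}"
      using finite_words_submultiset by (rule finite_subset[rotated]) blast
  qed (use mcoeff_word_weight_eq_0 in blast)+
  also have "\<dots> = (\<Sum>w\<in>{w \<in> smirnov_words. mset w \<subseteq># M}.
      mcoeff (word_weight (ascent_weight GM) (descent_weight GM) w) M)"
    using weight eq_upto_mcoeff by (intro sum.cong) blast+
  also have "\<dots> = mcoeff (\<Sum>a\<in>{1..m}. word_series (ascent_weight GM) (descent_weight GM) m a) M"
    by (rule mcoeff_sum_word_series[OF below, symmetric]) simp
  also have "\<dots> = G M"
    unfolding GM_eq by (rule G_coeff[symmetric]) simp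
  finally show ?thesis ..
qed

theorem smirnov_trees_generating_function:
  fixes G s t :: "'a mps"
  assumes "\<And>c. (rb + lb - r - l) * c = 0 \<Longrightarrow> c = 0"
  defines "G \<equiv> mps_sum smirnov_trees (tree_weight rb r lb l)"
    and "s \<equiv> mps_add (mps_smult (rb * lb) G) (mps_const (rb + lb))"
    and "t \<equiv> mps_add (mps_smult (r * l) G) (mps_const (r + l))"
  shows "mps_summable smirnov_trees (tree_weight rb r lb l)
    \<and> mps_summable smirnov_words
        (\<lambda>w. mps_mult (mps_mult (mps_pow s (asc w)) (mps_pow t (des w))) (mps_monom (mset w)))
    \<and> G = mps_sum smirnov_words
        (\<lambda>w. mps_mult (mps_mult (mps_pow s (asc w)) (mps_pow t (des w))) (mps_monom (mset w)))"
proof -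
  have "s = mcoeff (ascent_weight (Abs_mseries G))" "t = mcoeff (descent_weight (Abs_mseries G))"
    by (simp_all add: s_def t_def mcoeff_ascent_weight mcoeff_descent_weight)
  then have summand: "mps_mult (mps_mult (mps_pow s (asc w)) (mps_pow t (des w))) (mps_monom (mset w))
      = mcoeff (word_weight (ascent_weight (Abs_mseries G)) (descent_weight (Abs_mseries G)) w)" for w
    by (metis mcoeff_inverse mcoeff_word_weight_Abs)
  have "mps_summable smirnov_trees (tree_weight rb r lb l)"
    unfolding mps_summable_def
    by (auto intro: finite_subset[OF _ finite_labelled_trees] simp: tree_weight_def labelled_trees_def)
  moreover have "mps_summable smirnov_words (\<lambda>w. mcoeff (word_weight S T w))" for S T :: "'a mseries"
    unfolding mps_summable_def
    using mcoeff_word_weight_eq_0 by (blast intro: finite_subset[OF _ finite_words_submultiset])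
  moreover have "G = mps_sum smirnov_words (\<lambda>w. mcoeff (word_weight (ascent_weight (Abs_mseries G))
    (descent_weight (Abs_mseries G)) w))"
    using mps_sum_smirnov_trees_eq_words[OF assms(1)] by (auto simp: G_def)
  ultimately show ?thesis
    unfolding summand by blast
qed

end

lemma rhobar_lambdabar_neq_rho_lambda: "rhobar + lambdabar - rho - lambda \<noteq> (0 :: coeff)"
proof
  assume "rhobar + lambdabar - rho - lambda = (0 :: coeff)"
  then have "coeff (rhobar + lambdabar - rho - lambda) 1 = coeff (0 :: coeff) 1"
    by simp
  then show False
    by (simp add: rhobar_def rho_def lambdabar_def lambda_def coeff_monom)
qed

theorem mainTheorem2:
  fixes G s t :: "coeff mps"
  defines "G \<equiv> mps_sum smirnov_trees (tree_weight rhobar rho lambdabar lambda)"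
    and "s \<equiv> mps_add (mps_smult (rhobar * lambdabar) G) (mps_const (rhobar + lambdabar))"
    and "t \<equiv> mps_add (mps_smult (rho * lambda) G) (mps_const (rho + lambda))"
  shows "mps_summable smirnov_trees (tree_weight rhobar rho lambdabar lambda)
    \<and> mps_summable smirnov_words
        (\<lambda>w. mps_mult (mps_mult (mps_pow s (asc w)) (mps_pow t (des w))) (mps_monom (mset w)))
    \<and> G = mps_sum smirnov_words
        (\<lambda>w. mps_mult (mps_mult (mps_pow s (asc w)) (mps_pow t (des w))) (mps_monom (mset w)))"
  unfolding G_def s_def t_def
  by (rule smirnov_trees_generating_function) (use rhobar_lambdabar_neq_rho_lambda in simp)

end
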